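(* Let $\theta>0$ and $1\le p,q<\infty$, and let $p'$ be the conjugate exponent of $p$ ($\frac1p+\frac1{p'}=1$). If $g\in l^{q),\theta}(L^p)$ and $f\in l^{q)',\theta}(L^{p'})$, then $gf\in L^1(\mathbb R)$ and $$\int_{\mathbb R}|g(x)f(x)|\,dx\le\|g\|_{p,q),\theta}\,\|f\|_{p',q)',\theta}.$$
   Context: Here the index set is $\mathbb Z$ and $I_k=[k,k+1)$, so functions are defined on $\mathbb R=\bigcup_{k\in\mathbb Z}I_k$. The space $l^{q),\theta}(L^p)$ consists of complex-valued measurable $g$ on $\mathbb R$ with $g\chi_{I_k}\in L^p$ for all $k$ and $\|g\|_{p,q),\theta}:=\sup_{\varepsilon>0}\Big(\varepsilon^{\theta}\sum_{k\in\mathbb Z}\big(\int_{I_k}|g|^p\big)^{\frac{q(1+\varepsilon)}{p}}\Big)^{\frac{1}{q(1+\varepsilon)}}<\infty$. The small Lebesgue sequence space $l^{q)',\theta}$ consists of sequences $y=\{y_k\}_{k\in\mathbb Z}$ with $$\|y\|_{l^{q)',\theta}}:=\inf\Big\{\sum_{j\in\mathbb Z}\inf_{\varepsilon>0}\varepsilon^{\frac{-\theta}{q(1+\varepsilon)}}\Big(\sum_{k\in\mathbb Z}y_{k,j}^{(q(1+\varepsilon))'}\Big)^{\frac{1}{(q(1+\varepsilon))'}}\Big\}<\infty,$$ the outer infimum over all decompositions $|y_k|=\sum_{j\in\mathbb Z}y_{k,j}$ with $y_{k,j}\ge0$, and $(q(1+\varepsilon))'$ the conjugate exponent of $q(1+\varepsilon)$.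 For $1\le r\le\infty$, the auxiliary space $l^{q)',\theta}(L^{r})$ consists of complex-valued measurable $f$ on $\mathbb R$ with $f\chi_{I_k}\in L^{r}$ for all $k$ and $\|f\|_{r,q)',\theta}:=\big\|\{\|f\chi_{I_k}\|_{L^{r}}\}_{k\in\mathbb Z}\big\|_{l^{q)',\theta}}<\infty$ (with $L^\infty$ when $p=1$, $p'=\infty$). *)

theory Defs
  imports "HOL-Analysis.Analysis" "HOL-Probability.Essential_Supremum"
begin

definition Ik :: "int \<Rightarrow> real set" where
  "Ik k = {real_of_int k ..< real_of_int k + 1}"

definition epow :: "ennreal \<Rightarrow> real \<Rightarrow> ennreal" where
  "epow x a = (if x = top then top else ennreal (enn2real x powr a))"

definition conj_exp :: "real \<Rightarrow> real" where
  "conj_exp r = r / (r - 1)"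

definition loc_int :: "real \<Rightarrow> (real \<Rightarrow> complex) \<Rightarrow> int \<Rightarrow> real" where
  "loc_int p g k = (\<integral>x\<in>Ik k. norm (g x) powr p \<partial>lebesgue)"

definition grand_norm :: "real \<Rightarrow> real \<Rightarrow> real \<Rightarrow> (real \<Rightarrow> complex) \<Rightarrow> ennreal" where
  "grand_norm p q \<theta> g =
     (SUP \<epsilon>\<in>{0<..}. epow (ennreal (\<epsilon> powr \<theta>) *
          infsum (\<lambda>k. ennreal (loc_int p g k powr (q * (1 + \<epsilon>) / p))) UNIV)
        (1 / (q * (1 + \<epsilon>))))"

definition in_grand :: "real \<Rightarrow> real \<Rightarrow> real \<Rightarrow> (real \<Rightarrow> complex) \<Rightarrow> bool" where
  "in_grand p q \<theta> g \<longleftrightarrow> g \<in> borel_measurable lebesgue \<and>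
     (\<forall>k. set_integrable lebesgue (Ik k) (\<lambda>x. norm (g x) powr p)) \<and>
     grand_norm p q \<theta> g < top"

definition small_seq_norm :: "real \<Rightarrow> real \<Rightarrow> (int \<Rightarrow> real) \<Rightarrow> ennreal" where
  "small_seq_norm q \<theta> y =
     Inf { infsum (\<lambda>j. INF \<epsilon>\<in>{0<..}.
              ennreal (\<epsilon> powr (- \<theta> / (q * (1 + \<epsilon>)))) *
              epow (infsum (\<lambda>k. ennreal (z k j powr conj_exp (q * (1 + \<epsilon>)))) UNIV)
                   (1 / conj_exp (q * (1 + \<epsilon>)))) UNIV
         | z :: int \<Rightarrow> int \<Rightarrow> real.
           (\<forall>k j. 0 \<le> z k j) \<and> (\<forall>k. ((\<lambda>j. z k j) has_sum \<bar>y k\<bar>) UNIV) }"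

definition loc_Lr :: "real \<Rightarrow> (real \<Rightarrow> complex) \<Rightarrow> int \<Rightarrow> real" where
  "loc_Lr r f k = (\<integral>x\<in>Ik k. norm (f x) powr r \<partial>lebesgue) powr (1 / r)"

definition loc_Linf :: "(real \<Rightarrow> complex) \<Rightarrow> int \<Rightarrow> ereal" where
  "loc_Linf f k = esssup (restrict_space lebesgue (Ik k)) (\<lambda>x. ereal (norm (f x)))"

definition loc_dual :: "real \<Rightarrow> (real \<Rightarrow> complex) \<Rightarrow> int \<Rightarrow> real" where
  "loc_dual p f k = (if p = 1 then real_of_ereal (loc_Linf f k) else loc_Lr (conj_exp p) f k)"

definition small_norm :: "real \<Rightarrow> real \<Rightarrow> real \<Rightarrow> (real \<Rightarrow> complex) \<Rightarrow> ennreal" where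
  "small_norm p q \<theta> f = small_seq_norm q \<theta> (loc_dual p f)"

definition in_small :: "real \<Rightarrow> real \<Rightarrow> real \<Rightarrow> (real \<Rightarrow> complex) \<Rightarrow> bool" where
  "in_small p q \<theta> f \<longleftrightarrow> f \<in> borel_measurable lebesgue \<and>
     (\<forall>k. if p = 1 then loc_Linf f k < \<infinity>
          else set_integrable lebesgue (Ik k) (\<lambda>x. norm (f x) powr conj_exp p)) \<and>
     small_norm p q \<theta> f < top"

end

theory Submission
  imports Defs
begin

(* Cut the line into the unit intervals I_k. On each of them Hoelder's inequality (for p = 1, the
   bound by the essential supremum) gives  int_{I_k} |g f| <= a_k b_k  with a_k the local L^p norm
   of g and b_k the local L^{p'} norm of f, so everything reduces to the discrete duality
   sum_k a_k b_k <= ||a||_{l^{q),theta}} ||b||_{l^{q)',theta}}.  For a decomposition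
   b_k = sum_j z_{k,j} and any eps > 0, discrete Hoelder with r = q(1+eps) and its conjugate r' gives
     sum_k a_k z_{k,j} <= (eps^theta sum_k a_k^r)^{1/r} * eps^{-theta/r} ||z_{.,j}||_{r'},
   whose first factor is at most the grand norm of a.  Taking the infimum over eps, summing over j
   and taking the infimum over all decompositions yields the claim. *)

lemma epow_ennreal_cmult:
  assumes "c > 0" and "s > 0"
  shows "epow (ennreal c * X) s = ennreal (c powr s) * epow X s"
proof (cases "X = top")
  case True
  then show ?thesis using assms by (simp add: epow_def ennreal_mult_top)
next
  case False
  then obtain x where "X = ennreal x" "x \<ge> 0" by (cases X) auto
  then show ?thesis using assms
    by (simp add: epow_def ennreal_mult[symmetric] powr_mult del: ennreal_mult_eq_top_iff)
qed

lemma conj_exp_gt_1: "r > 1 \<Longrightarrow> conj_exp r > 1"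
  by (simp add: conj_exp_def field_simps)

lemma conj_exp_inverse_add: "r > 1 \<Longrightarrow> 1 / r + 1 / conj_exp r = 1"
  by (simp add: conj_exp_def field_simps)

lemma nn_integral_Holder_finite:
  fixes f g :: "'a \<Rightarrow> real"
  assumes p: "p > 1" and q: "q > 1" and pq: "1/p + 1/q = 1"
    and [measurable]: "f \<in> borel_measurable M" "g \<in> borel_measurable M"
    and f0: "\<And>x. 0 \<le> f x" and g0: "\<And>x. 0 \<le> g x"
    and A: "(\<integral>\<^sup>+x. ennreal (f x powr p) \<partial>M) = ennreal a" "a > 0"
    and B: "(\<integral>\<^sup>+x. ennreal (g x powr q) \<partial>M) = ennreal b" "b > 0"
  shows "(\<integral>\<^sup>+x. ennreal (f x * g x) \<partial>M) \<le> ennreal (a powr (1/p) * b powr (1/q))"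
proof -
  define \<alpha> where "\<alpha> = a powr (1/p)"
  define \<beta> where "\<beta> = b powr (1/q)"
  have \<alpha>\<beta>: "\<alpha> > 0" "\<beta> > 0" "\<alpha> powr p = a" "\<beta> powr q = b"
    using A(2) B(2) p q by (auto simp: \<alpha>_def \<beta>_def powr_powr)
  define c d where "c = \<alpha> * \<beta> / (p * a)" and "d = \<alpha> * \<beta> / (q * b)"
  have cd: "c \<ge> 0" "d \<ge> 0" using \<alpha>\<beta> A(2) B(2) p q by (auto simp: c_def d_def)
  have Young: "f x * g x \<le> c * f x powr p + d * g x powr q" for x
  proof -
    have "(f x / \<alpha>) * (g x / \<beta>) \<le> (f x / \<alpha>) powr p / p + (g x / \<beta>) powr q / q"
      by (rule Youngs_inequality) (use p q pq f0 g0 \<alpha>\<beta> in auto)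
    also have "\<dots> = f x powr p / (p * a) + g x powr q / (q * b)"
      using f0 g0 \<alpha>\<beta> by (simp add: powr_divide mult.commute)
    finally show ?thesis
      using \<alpha>\<beta> by (simp add: c_def d_def field_simps)
  qed
  have "(\<integral>\<^sup>+x. ennreal (f x * g x) \<partial>M)
      \<le> (\<integral>\<^sup>+x. ennreal c * ennreal (f x powr p) + ennreal d * ennreal (g x powr q) \<partial>M)"
    using Young cd by (intro nn_integral_mono) (simp add: ennreal_mult[symmetric] ennreal_plus[symmetric] ennreal_leI del: ennreal_plus)
  also have "\<dots> = ennreal c * ennreal a + ennreal d * ennreal b"
    by (subst nn_integral_add) (auto simp: nn_integral_cmult A B)
  also have "\<dots> = ennreal (\<alpha> * \<beta> * (1/p + 1/q))"
    using A(2) B(2) cd p q by (simp add: c_def d_def ennreal_mult[symmetric] ennreal_plus[symmetric] field_simps del: ennreal_plus)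
  finally show ?thesis
    by (simp add: pq \<alpha>_def \<beta>_def)
qed

lemma nn_integral_Holder:
  fixes f g :: "'a \<Rightarrow> real"
  assumes p: "p > 1" and q: "q > 1" and pq: "1/p + 1/q = 1"
    and [measurable]: "f \<in> borel_measurable M" "g \<in> borel_measurable M"
    and f0: "\<And>x. 0 \<le> f x" and g0: "\<And>x. 0 \<le> g x"
  shows "(\<integral>\<^sup>+x. ennreal (f x * g x) \<partial>M) \<le>
    epow (\<integral>\<^sup>+x. ennreal (f x powr p) \<partial>M) (1/p) * epow (\<integral>\<^sup>+x. ennreal (g x powr q) \<partial>M) (1/q)"
proof -
  define A where "A = (\<integral>\<^sup>+x. ennreal (f x powr p) \<partial>M)"
  define B where "B = (\<integral>\<^sup>+x. ennreal (g x powr q) \<partial>M)"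
  consider "A = 0 \<or> B = 0" | "A \<noteq> 0" "B \<noteq> 0" "A = top \<or> B = top"
    | a b where "A = ennreal a" "a > 0" "B = ennreal b" "b > 0"
    by (cases A; cases B) (auto simp: le_less)
  then have "(\<integral>\<^sup>+x. ennreal (f x * g x) \<partial>M) \<le> epow A (1/p) * epow B (1/q)"
  proof cases
    case 1
    then have "AE x in M. f x = 0 \<or> g x = 0"
      using f0 g0 p q by (auto simp: A_def B_def nn_integral_0_iff_AE elim!: eventually_mono)
    then have "(\<integral>\<^sup>+x. ennreal (f x * g x) \<partial>M) = 0"
      by (subst nn_integral_0_iff_AE) (auto elim!: eventually_mono)
    then show ?thesis by simp
  next
    case 2
    then have "epow A (1/p) * epow B (1/q) = top"
      using p q by (auto simp: epow_def enn2real_eq_0_iff ennreal_mult_eq_top_iff)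
    then show ?thesis by simp
  next
    case 3
    then show ?thesis
      using nn_integral_Holder_finite[OF p q pq assms(4-7)] by (simp add: A_def B_def epow_def ennreal_mult)
  qed
  then show ?thesis unfolding A_def B_def .
qed

lemma set_integral_nonneg:
  fixes u :: "'a \<Rightarrow> real"
  shows "(\<And>x. x \<in> A \<Longrightarrow> 0 \<le> u x) \<Longrightarrow> 0 \<le> (\<integral>x\<in>A. u x \<partial>M)"
  unfolding set_lebesgue_integral_def by (intro integral_nonneg_AE) (auto split: split_indicator)

lemma set_nn_integral_eq_set_integral:
  fixes u :: "'a \<Rightarrow> real"
  assumes "set_integrable M A u" and "\<And>x. 0 \<le> u x"
  shows "(\<integral>\<^sup>+x\<in>A. ennreal (u x) \<partial>M) = ennreal (\<integral>x\<in>A. u x \<partial>M)"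
proof -
  have "(\<integral>\<^sup>+x\<in>A. ennreal (u x) \<partial>M) = (\<integral>\<^sup>+x. ennreal (indicator A x *\<^sub>R u x) \<partial>M)"
    by (intro nn_integral_cong) (auto split: split_indicator)
  also have "\<dots> = ennreal (\<integral>x\<in>A. u x \<partial>M)"
    unfolding set_lebesgue_integral_def
    by (rule nn_integral_eq_integral) (use assms in \<open>auto simp: set_integrable_def\<close>)
  finally show ?thesis .
qed

lemma set_nn_integral_Holder:
  fixes u v :: "'a \<Rightarrow> real"
  assumes p: "p > 1" and q: "q > 1" and pq: "1/p + 1/q = 1"
    and [measurable]: "u \<in> borel_measurable M" "v \<in> borel_measurable M"
    and u0: "\<And>x. 0 \<le> u x" and v0: "\<And>x. 0 \<le> v x"
    and ui: "set_integrable M A (\<lambda>x. u x powr p)" and vi: "set_integrable M A (\<lambda>x. v x powr q)"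
    and [measurable]: "A \<in> sets M"
  shows "(\<integral>\<^sup>+x\<in>A. ennreal (u x * v x) \<partial>M)
           \<le> ennreal ((\<integral>x\<in>A. u x powr p \<partial>M) powr (1/p) * (\<integral>x\<in>A. v x powr q \<partial>M) powr (1/q))"
proof -
  have restrict: "(\<integral>\<^sup>+x. ennreal ((w x * indicator A x) powr r) \<partial>M) = ennreal (\<integral>x\<in>A. w x powr r \<partial>M)"
    if "r > 0" "set_integrable M A (\<lambda>x. w x powr r)" for w :: "'a \<Rightarrow> real" and r
  proof -
    have "(\<integral>\<^sup>+x. ennreal ((w x * indicator A x) powr r) \<partial>M) = (\<integral>\<^sup>+x\<in>A. ennreal (w x powr r) \<partial>M)"
      using \<open>r > 0\<close> by (intro nn_integral_cong) (auto split: split_indicator)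
    also have "\<dots> = ennreal (\<integral>x\<in>A. w x powr r \<partial>M)"
      by (rule set_nn_integral_eq_set_integral) (use that in auto)
    finally show ?thesis .
  qed
  have "(\<integral>\<^sup>+x\<in>A. ennreal (u x * v x) \<partial>M)
      = (\<integral>\<^sup>+x. ennreal ((u x * indicator A x) * (v x * indicator A x)) \<partial>M)"
    by (intro nn_integral_cong) (auto split: split_indicator)
  also have "\<dots> \<le> epow (\<integral>\<^sup>+x. ennreal ((u x * indicator A x) powr p) \<partial>M) (1/p) *
                    epow (\<integral>\<^sup>+x. ennreal ((v x * indicator A x) powr q) \<partial>M) (1/q)"
    by (rule nn_integral_Holder[OF p q pq]) (auto simp: u0 v0)
  also have "\<dots> = ennreal ((\<integral>x\<in>A. u x powr p \<partial>M) powr (1/p) * (\<integral>x\<in>A. v x powr q \<partial>M) powr (1/q))"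
    using p q ui vi by (simp add: restrict epow_def ennreal_mult set_integral_nonneg u0 v0)
  finally show ?thesis .
qed

lemma set_nn_integral_mult_le_esssup:
  fixes u v :: "'a \<Rightarrow> real"
  assumes "A \<in> sets M" and "\<And>x. 0 \<le> u x" and "u \<in> borel_measurable M"
    and "esssup (restrict_space M A) (\<lambda>x. ereal (v x)) = ereal c"
  shows "(\<integral>\<^sup>+x\<in>A. ennreal (u x * v x) \<partial>M) \<le> ennreal c * (\<integral>\<^sup>+x\<in>A. ennreal (u x) \<partial>M)"
proof -
  have "AE x in M. x \<in> A \<longrightarrow> v x \<le> c"
    using esssup_AE[of "\<lambda>x. ereal (v x)" "restrict_space M A"] assms(1,4)
    by (simp add: AE_restrict_space_iff)
  then have "AE x in M. ennreal (u x * v x) * indicator A x \<le> ennreal c * (ennreal (u x) * indicator A x)"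
  proof eventually_elim
    case (elim x)
    then have "x \<in> A \<Longrightarrow> u x * v x \<le> c * u x"
      using assms(2)[of x] mult_left_mono[of "v x" c "u x"] by (simp add: mult.commute)
    then show ?case
      using assms(2)[of x] by (simp add: ennreal_mult''[symmetric] ennreal_leI split: split_indicator)
  qed
  then have "(\<integral>\<^sup>+x\<in>A. ennreal (u x * v x) \<partial>M) \<le> (\<integral>\<^sup>+x. ennreal c * (ennreal (u x) * indicator A x) \<partial>M)"
    by (rule nn_integral_mono_AE)
  also have "\<dots> = ennreal c * (\<integral>\<^sup>+x\<in>A. ennreal (u x) \<partial>M)"
    using assms(1,3) by (intro nn_integral_cmult) auto
  finally show ?thesis .
qed

(* ennreal is not a uniform space, so the Fubini theorems for infsum do not apply to it;
   sums are exchanged via the counting measure instead. *)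
lemma infsum_ennreal_int_eq_nn_integral:
  fixes f :: "int \<Rightarrow> ennreal"
  shows "infsum f UNIV = (\<integral>\<^sup>+i. f i \<partial>count_space UNIV)"
proof (rule antisym)
  have infsum_SUP: "infsum f UNIV = (SUP F\<in>{F. finite F \<and> F \<subseteq> UNIV}. sum f F)"
    by (rule nonneg_infsum_complete) simp
  have "sum f F \<le> (\<integral>\<^sup>+i. f i \<partial>count_space UNIV)" if "finite F" for F
  proof -
    have "sum f F = (\<integral>\<^sup>+i. f i * indicator F i \<partial>count_space UNIV)"
      using that by (simp add: nn_integral_count_space_finite nn_integral_count_space_indicator[symmetric])
    also have "\<dots> \<le> (\<integral>\<^sup>+i. f i \<partial>count_space UNIV)"
      by (intro nn_integral_mono) (auto split: split_indicator)
    finally show ?thesis .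
  qed
  then show "infsum f UNIV \<le> (\<integral>\<^sup>+i. f i \<partial>count_space UNIV)"
    unfolding infsum_SUP by (auto intro: SUP_least)
  have "(\<integral>\<^sup>+i. f i \<partial>count_space UNIV) = (\<Sum>n. f (int_decode n))"
    using nn_integral_bij_count_space[of int_decode UNIV UNIV f] bij_int_decode
    by (simp add: nn_integral_count_space_nat)
  also have "\<dots> = (SUP n. sum f (int_decode ` {..<n}))"
    using bij_int_decode
    by (simp add: suminf_eq_SUP sum.reindex bij_def inj_on_subset[of _ UNIV] del: SUP_apply)
  also have "\<dots> \<le> infsum f UNIV"
    unfolding infsum_SUP by (auto intro!: SUP_mono)
  finally show "(\<integral>\<^sup>+i. f i \<partial>count_space UNIV) \<le> infsum f UNIV" .
qed

lemma infsum_ennreal_of_has_sum: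
  fixes f :: "'a \<Rightarrow> real"
  assumes "(f has_sum s) A" and "\<And>x. x \<in> A \<Longrightarrow> 0 \<le> f x"
  shows "infsum (\<lambda>x. ennreal (f x)) A = ennreal s"
proof -
  have s: "s = infsum f A" "f summable_on A"
    using assms by (auto simp: infsumI summable_on_def)
  have "ennreal (infsum f A) = (SUP F\<in>{F. finite F \<and> F \<subseteq> A}. ennreal (sum f F))"
    by (rule infsum_nonneg_is_SUPREMUM_ennreal) (use assms s in auto)
  also have "\<dots> = (SUP F\<in>{F. finite F \<and> F \<subseteq> A}. sum (\<lambda>x. ennreal (f x)) F)"
    using assms by (intro SUP_cong refl) (auto intro!: sum_ennreal[symmetric])
  also have "\<dots> = infsum (\<lambda>x. ennreal (f x)) A"
    by (rule nonneg_infsum_complete[symmetric]) simp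
  finally show ?thesis using s by simp
qed

lemma le_mult_Inf_ennreal:
  fixes c :: ennreal
  assumes "c < top" and "S \<noteq> {}" and "\<And>s. s \<in> S \<Longrightarrow> x \<le> c * s"
  shows "x \<le> c * Inf S"
proof -
  have "c * Inf S = (INF s\<in>S. c * s)"
  proof (rule continuous_at_Inf_mono)
    show "mono ((*) c)" by (rule monoI) (simp add: mult_left_mono)
    have "continuous_on UNIV ((*) c)"
      using ennreal_continuous_on_cmult[OF assms(1) continuous_on_id] by simp
    then show "continuous (at_right (Inf S)) ((*) c)"
      by (simp add: continuous_on_eq_continuous_within continuous_within_subset)
         (meson continuous_at_imp_continuous_at_within)
  qed (use assms(2) in auto)
  then show ?thesis using assms(3) by (auto intro: INF_greatest)
qed

definition grand_seq_norm :: "real \<Rightarrow> real \<Rightarrow> (int \<Rightarrow> real) \<Rightarrow> ennreal" where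
  "grand_seq_norm q \<theta> a =
     (SUP \<epsilon>\<in>{0<..}. epow (ennreal (\<epsilon> powr \<theta>) *
          infsum (\<lambda>k. ennreal (a k powr (q * (1 + \<epsilon>)))) UNIV) (1 / (q * (1 + \<epsilon>))))"

lemma grand_norm_eq_grand_seq_norm:
  "grand_norm p q \<theta> g = grand_seq_norm q \<theta> (\<lambda>k. loc_int p g k powr (1/p))"
  unfolding grand_norm_def grand_seq_norm_def
  by (intro SUP_cong refl arg_cong2[where f=epow] arg_cong2[where f="(*)"] infsum_cong)
     (simp add: powr_powr)

lemma epow_le_grand_seq_norm:
  assumes "\<epsilon> > 0" and "q > 0" and "r = q * (1 + \<epsilon>)"
  shows "epow (infsum (\<lambda>k. ennreal (a k powr r)) UNIV) (1/r)
           \<le> ennreal (\<epsilon> powr (- \<theta> / r)) * grand_seq_norm q \<theta> a"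
proof -
  have r: "r > 0" using assms by simp
  let ?X = "infsum (\<lambda>k. ennreal (a k powr r)) UNIV"
  have "epow ?X (1/r) = ennreal (\<epsilon> powr (- \<theta> / r)) * (ennreal (\<epsilon> powr (\<theta> / r)) * epow ?X (1/r))"
    using assms(1) by (simp add: mult.assoc[symmetric] ennreal_mult[symmetric] powr_add[symmetric])
  also have "ennreal (\<epsilon> powr (\<theta> / r)) * epow ?X (1/r) = epow (ennreal (\<epsilon> powr \<theta>) * ?X) (1/r)"
    using assms(1) r by (simp add: epow_ennreal_cmult powr_powr)
  also have "\<dots> \<le> grand_seq_norm q \<theta> a"
    unfolding grand_seq_norm_def assms(3) using assms(1) by (intro SUP_upper2[of \<epsilon>]) auto
  finally show ?thesis by (simp add: mult_left_mono)
qed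

lemma infsum_mult_le_grand_seq_norm:
  fixes a y :: "int \<Rightarrow> real"
  assumes q: "q \<ge> 1" and \<epsilon>: "\<epsilon> > 0" and r: "r = q * (1 + \<epsilon>)"
    and a0: "\<And>k. 0 \<le> a k" and y0: "\<And>k. 0 \<le> y k"
  shows "infsum (\<lambda>k. ennreal (a k * y k)) UNIV \<le> grand_seq_norm q \<theta> a *
           (ennreal (\<epsilon> powr (- \<theta> / r)) *
            epow (infsum (\<lambda>k. ennreal (y k powr conj_exp r)) UNIV) (1 / conj_exp r))"
proof -
  have "1 + \<epsilon> \<le> r"
    using q \<epsilon> mult_right_mono[of 1 q "1 + \<epsilon>"] unfolding r by simp
  then have "r > 1"
    using \<epsilon> by linarith
  then have "infsum (\<lambda>k. ennreal (a k * y k)) UNIV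
      \<le> epow (infsum (\<lambda>k. ennreal (a k powr r)) UNIV) (1/r) *
         epow (infsum (\<lambda>k. ennreal (y k powr conj_exp r)) UNIV) (1 / conj_exp r)"
    using nn_integral_Holder[of r "conj_exp r" a "count_space UNIV" y] a0 y0
    by (simp add: conj_exp_gt_1 conj_exp_inverse_add infsum_ennreal_int_eq_nn_integral)
  also have "\<dots> \<le> ennreal (\<epsilon> powr (- \<theta> / r)) * grand_seq_norm q \<theta> a *
         epow (infsum (\<lambda>k. ennreal (y k powr conj_exp r)) UNIV) (1 / conj_exp r)"
    using q \<epsilon> r by (intro mult_right_mono epow_le_grand_seq_norm) auto
  finally show ?thesis by (simp add: mult_ac)
qed

definition small_block_norm :: "real \<Rightarrow> real \<Rightarrow> (int \<Rightarrow> real) \<Rightarrow> ennreal" where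
  "small_block_norm q \<theta> y =
     (INF \<epsilon>\<in>{0<..}. ennreal (\<epsilon> powr (- \<theta> / (q * (1 + \<epsilon>)))) *
        epow (infsum (\<lambda>k. ennreal (y k powr conj_exp (q * (1 + \<epsilon>)))) UNIV)
             (1 / conj_exp (q * (1 + \<epsilon>))))"

lemma small_seq_norm_eq_Inf_small_block_norm:
  "small_seq_norm q \<theta> b =
     Inf {infsum (\<lambda>j. small_block_norm q \<theta> (\<lambda>k. z k j)) UNIV | z :: int \<Rightarrow> int \<Rightarrow> real.
           (\<forall>k j. 0 \<le> z k j) \<and> (\<forall>k. ((\<lambda>j. z k j) has_sum \<bar>b k\<bar>) UNIV)}"
  unfolding small_seq_norm_def small_block_norm_def ..

lemma infsum_mult_le_grand_seq_norm_small_block_norm: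
  fixes a y :: "int \<Rightarrow> real"
  assumes q: "q \<ge> 1" and a0: "\<And>k. 0 \<le> a k" and y0: "\<And>k. 0 \<le> y k"
    and G: "grand_seq_norm q \<theta> a < top"
  shows "infsum (\<lambda>k. ennreal (a k * y k)) UNIV \<le> grand_seq_norm q \<theta> a * small_block_norm q \<theta> y"
  unfolding small_block_norm_def
proof (rule le_mult_Inf_ennreal[OF G])
  fix t
  assume "t \<in> (\<lambda>\<epsilon>. ennreal (\<epsilon> powr (- \<theta> / (q * (1 + \<epsilon>)))) *
              epow (infsum (\<lambda>k. ennreal (y k powr conj_exp (q * (1 + \<epsilon>)))) UNIV)
                   (1 / conj_exp (q * (1 + \<epsilon>)))) ` {0<..}"
  then obtain \<epsilon> where "\<epsilon> > 0" and "t = ennreal (\<epsilon> powr (- \<theta> / (q * (1 + \<epsilon>)))) *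
              epow (infsum (\<lambda>k. ennreal (y k powr conj_exp (q * (1 + \<epsilon>)))) UNIV)
                   (1 / conj_exp (q * (1 + \<epsilon>)))"
    by blast
  then show "infsum (\<lambda>k. ennreal (a k * y k)) UNIV \<le> grand_seq_norm q \<theta> a * t"
    using infsum_mult_le_grand_seq_norm[OF q _ refl a0 y0] by simp
qed auto

lemma infsum_mult_le_grand_seq_norm_small_seq_norm:
  fixes a b :: "int \<Rightarrow> real"
  assumes q: "q \<ge> 1" and a0: "\<And>k. 0 \<le> a k" and G: "grand_seq_norm q \<theta> a < top"
  shows "infsum (\<lambda>k. ennreal (a k * \<bar>b k\<bar>)) UNIV \<le> grand_seq_norm q \<theta> a * small_seq_norm q \<theta> b"
  unfolding small_seq_norm_eq_Inf_small_block_norm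
proof (rule le_mult_Inf_ennreal[OF G], goal_cases nonempty decomposition)
  case nonempty
  have "((\<lambda>j. if j = 0 then \<bar>b k\<bar> else 0) has_sum \<bar>b k\<bar>) UNIV" for k
    by (rule has_sum_cong_neutral[THEN iffD1, of _ "{0}", OF _ _ _ has_sum_finiteI]) auto
  then have "\<exists>z :: int \<Rightarrow> int \<Rightarrow> real. (\<forall>k j. 0 \<le> z k j) \<and> (\<forall>k. ((\<lambda>j. z k j) has_sum \<bar>b k\<bar>) UNIV)"
    by (intro exI[of _ "\<lambda>k j. if j = 0 then \<bar>b k\<bar> else 0"]) auto
  then show ?case by auto
next
  case (decomposition s)
  then obtain z :: "int \<Rightarrow> int \<Rightarrow> real" where z0: "\<And>k j. 0 \<le> z k j"
    and zsum: "\<And>k. ((\<lambda>j. z k j) has_sum \<bar>b k\<bar>) UNIV"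
    and s: "s = infsum (\<lambda>j. small_block_norm q \<theta> (\<lambda>k. z k j)) UNIV"
    by blast
  have row: "ennreal (a k * \<bar>b k\<bar>) = infsum (\<lambda>j. ennreal (a k * z k j)) UNIV" for k
    using has_sum_cmult_right[OF zsum[of k], of "a k"] a0 z0
    by (intro infsum_ennreal_of_has_sum[symmetric]) auto
  have "infsum (\<lambda>k. ennreal (a k * \<bar>b k\<bar>)) UNIV
      = (\<integral>\<^sup>+k. (\<integral>\<^sup>+j. ennreal (a k * z k j) \<partial>count_space UNIV) \<partial>count_space UNIV)"
    by (simp add: row infsum_ennreal_int_eq_nn_integral)
  also have "\<dots> = (\<integral>\<^sup>+j. (\<integral>\<^sup>+k. ennreal (a k * z k j) \<partial>count_space UNIV) \<partial>count_space UNIV)"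
    by (rule nn_integral_count_space_nn_integral) auto
  also have "\<dots> \<le> (\<integral>\<^sup>+j. grand_seq_norm q \<theta> a * small_block_norm q \<theta> (\<lambda>k. z k j) \<partial>count_space UNIV)"
    using infsum_mult_le_grand_seq_norm_small_block_norm[OF q a0 z0 G]
    by (intro nn_integral_mono) (simp add: infsum_ennreal_int_eq_nn_integral)
  also have "\<dots> = grand_seq_norm q \<theta> a * s"
    by (simp add: s infsum_ennreal_int_eq_nn_integral nn_integral_cmult)
  finally show ?case .
qed

lemma sets_Ik [measurable]: "Ik k \<in> sets lebesgue"
  unfolding Ik_def by simp

lemma emeasure_Ik: "emeasure lebesgue (Ik k) = 1"
  unfolding Ik_def by simp

lemma Ik_iff_floor: "x \<in> Ik k \<longleftrightarrow> k = \<lfloor>x\<rfloor>"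
  unfolding Ik_def by (auto simp: floor_eq_iff) linarith+

lemma nn_integral_lebesgue_eq_infsum_Ik:
  assumes [measurable]: "h \<in> borel_measurable lebesgue"
  shows "(\<integral>\<^sup>+x. h x \<partial>lebesgue) = infsum (\<lambda>k. \<integral>\<^sup>+x\<in>Ik k. h x \<partial>lebesgue) UNIV"
proof -
  have "h x = (\<integral>\<^sup>+k. h x * indicator (Ik k) x \<partial>count_space UNIV)" for x
    by (subst nn_integral_count_space'[of "{\<lfloor>x\<rfloor>}"]) (auto simp: Ik_iff_floor)
  then have "(\<integral>\<^sup>+x. h x \<partial>lebesgue)
      = (\<integral>\<^sup>+x. (\<integral>\<^sup>+k. h x * indicator (Ik k) x \<partial>count_space UNIV) \<partial>lebesgue)"
    by simp
  also have "\<dots> = (\<integral>\<^sup>+k. (\<integral>\<^sup>+x\<in>Ik k. h x \<partial>lebesgue) \<partial>count_space UNIV)"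
    by (rule nn_integral_count_space_nn_integral) auto
  finally show ?thesis
    by (simp add: infsum_ennreal_int_eq_nn_integral)
qed

lemma loc_Linf_nonneg: "0 \<le> loc_Linf f k"
proof (cases "(\<lambda>x. ereal (norm (f x))) \<in> borel_measurable (restrict_space lebesgue (Ik k))")
  case True
  have "emeasure (restrict_space lebesgue (Ik k)) (space (restrict_space lebesgue (Ik k))) = 1"
    by (simp add: emeasure_restrict_space emeasure_Ik)
  then have "esssup (restrict_space lebesgue (Ik k)) (\<lambda>x. 0) = (0 :: ereal)"
    by (intro esssup_const) simp
  moreover have "esssup (restrict_space lebesgue (Ik k)) (\<lambda>x. 0) \<le> loc_Linf f k"
    unfolding loc_Linf_def by (rule esssup_mono) auto
  ultimately show ?thesis by simp
qed (simp add: loc_Linf_def esssup_non_measurable)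

lemma loc_dual_nonneg: "0 \<le> loc_dual p f k"
  using loc_Linf_nonneg[of f k]
  by (simp add: loc_dual_def loc_Lr_def real_of_ereal_pos)

lemma set_nn_integral_Ik_mult_le:
  assumes p: "p \<ge> 1" and [measurable]: "g \<in> borel_measurable lebesgue" "f \<in> borel_measurable lebesgue"
    and gi: "set_integrable lebesgue (Ik k) (\<lambda>x. norm (g x) powr p)"
    and fi: "if p = 1 then loc_Linf f k < \<infinity>
             else set_integrable lebesgue (Ik k) (\<lambda>x. norm (f x) powr conj_exp p)"
  shows "(\<integral>\<^sup>+x\<in>Ik k. ennreal (norm (g x * f x)) \<partial>lebesgue)
           \<le> ennreal (loc_int p g k powr (1/p) * loc_dual p f k)"
proof (cases "p = 1")
  case True
  then obtain c where c: "loc_Linf f k = ereal c"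
    using fi loc_Linf_nonneg[of f k] by (cases "loc_Linf f k") auto
  have "(\<integral>\<^sup>+x\<in>Ik k. ennreal (norm (g x) * norm (f x)) \<partial>lebesgue)
      \<le> ennreal c * (\<integral>\<^sup>+x\<in>Ik k. ennreal (norm (g x)) \<partial>lebesgue)"
    using c by (intro set_nn_integral_mult_le_esssup) (auto simp: loc_Linf_def)
  also have "\<dots> = ennreal (loc_int p g k powr (1/p) * loc_dual p f k)"
    using True gi c loc_dual_nonneg[of p f k]
    by (simp add: set_nn_integral_eq_set_integral loc_int_def loc_dual_def set_integral_nonneg ennreal_mult mult.commute)
  finally show ?thesis by (simp add: norm_mult)
next
  case False
  then have "p > 1" using p by simp
  then show ?thesis
    using set_nn_integral_Holder[OF \<open>p > 1\<close> conj_exp_gt_1 conj_exp_inverse_add, of "\<lambda>x. norm (g x)" lebesgue "\<lambda>x. norm (f x)" "Ik k"]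
      gi fi False
    by (simp add: norm_mult loc_int_def loc_dual_def loc_Lr_def)
qed

theorem theorem3p8:
  fixes p q \<theta> :: real and g f :: "real \<Rightarrow> complex"
  assumes "\<theta> > 0" and "1 \<le> p" and "1 \<le> q"
    and "in_grand p q \<theta> g" and "in_small p q \<theta> f"
  shows "integrable lebesgue (\<lambda>x. g x * f x) \<and>
         ennreal (\<integral>x. norm (g x * f x) \<partial>lebesgue) \<le> grand_norm p q \<theta> g * small_norm p q \<theta> f"
proof -
  \<comment> \<open>The bound holds for every \<open>\<theta>\<close>.\<close>
  have [measurable]: "g \<in> borel_measurable lebesgue" "f \<in> borel_measurable lebesgue"
    and G: "grand_norm p q \<theta> g < top" and N: "small_norm p q \<theta> f < top"
    using assms(4,5) by (auto simp: in_grand_def in_small_def)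
  have "(\<integral>\<^sup>+x. ennreal (norm (g x * f x)) \<partial>lebesgue)
      = infsum (\<lambda>k. \<integral>\<^sup>+x\<in>Ik k. ennreal (norm (g x * f x)) \<partial>lebesgue) UNIV"
    by (rule nn_integral_lebesgue_eq_infsum_Ik) measurable
  also have "\<dots> \<le> infsum (\<lambda>k. ennreal (loc_int p g k powr (1/p) * \<bar>loc_dual p f k\<bar>)) UNIV"
    using assms(2,4,5)
    by (intro infsum_mono nonneg_summable_on_complete)
       (auto simp: in_grand_def in_small_def abs_of_nonneg loc_dual_nonneg intro!: set_nn_integral_Ik_mult_le)
  also have "\<dots> \<le> grand_norm p q \<theta> g * small_norm p q \<theta> f"
    using assms(3) G unfolding grand_norm_eq_grand_seq_norm small_norm_def
    by (intro infsum_mult_le_grand_seq_norm_small_seq_norm) auto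
  finally have bound: "(\<integral>\<^sup>+x. ennreal (norm (g x * f x)) \<partial>lebesgue) \<le> grand_norm p q \<theta> g * small_norm p q \<theta> f" .
  moreover have "grand_norm p q \<theta> g * small_norm p q \<theta> f < top"
    using G N by (simp add: ennreal_mult_less_top)
  ultimately have "integrable lebesgue (\<lambda>x. g x * f x)"
    by (intro integrableI_bounded) auto
  with bound show ?thesis
    by (simp add: nn_integral_eq_integral[symmetric])
qed

end
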